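(* Let $\mathcal R$ be a nonzero commutative ring. Then $\mathcal R[[Y]]^{W^v}=\mathcal R[Y]^{W^v}$ (i.e. every $W^v$-invariant element of the Looijenga algebra has finite support) if and only if $W^v$ is finite.
   Context: $I$ finite, $A$ a generalized Cartan matrix; $X,Y$ dual free $\mathbb Z$-modules of finite rank with free families $(\alpha_i)\subset X$, $(\alpha_i^\vee)\subset Y$, $\alpha_j(\alpha_i^\vee)=a_{i,j}$; $\mathbb A=Y\otimes\mathbb R$; $r_i(v)=v-\alpha_i(v)\alpha_i^\vee$; $W^v=\langle r_i\rangle$; $Q^\vee_+=\bigoplus\mathbb N\alpha_i^\vee$, $x\le_{Q^\vee}y$ iff $y-x\in Q^\vee_+$. A set $E\subset Y$ is almost finite if there is a finite $J\subset Y$ with every element of $E$ $\le_{Q^\vee}$ some element of $J$. $\mathcal R[[Y]]$ is the set of formal series $\sum_{\lambda\in Y}a_\lambda e^\lambda$ with almost finite support ($e^\lambda e^\mu=e^{\lambda+\mu}$), $\mathcal R[Y]$ its subalgebra of finitely supported elements, and the superscript $W^v$ denotes elements with $a_{w(\lambda)}=a_\lambda$ for all $w\in W^v$. *)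

theory Defs
  imports Main
begin

text \<open>The lattice Y (a free Z-module of finite rank) is modelled as
  Y = Z^D for a finite coordinate set D, i.e. integer functions supported in D.
  Its dual X is modelled the same way, with the perfect pairing given by
  the dot product over D.\<close>

definition lat :: "'d set \<Rightarrow> ('d \<Rightarrow> int) set" where
  "lat D = {y. \<forall>k. k \<notin> D \<longrightarrow> y k = 0}"

definition pair :: "'d set \<Rightarrow> ('d \<Rightarrow> int) \<Rightarrow> ('d \<Rightarrow> int) \<Rightarrow> int" where
  "pair D x y = (\<Sum>k\<in>D. x k * y k)"

definition free_family :: "'i set \<Rightarrow> ('i \<Rightarrow> 'd \<Rightarrow> int) \<Rightarrow> bool" where
  "free_family I v = (\<forall>c :: 'i \<Rightarrow> int.
      (\<lambda>k. \<Sum>i\<in>I. c i * v i k) = (\<lambda>k. 0) \<longrightarrow> (\<forall>i\<in>I. c i = 0))"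

definition gen_cartan :: "'i set \<Rightarrow> ('i \<Rightarrow> 'i \<Rightarrow> int) \<Rightarrow> bool" where
  "gen_cartan I a = ((\<forall>i\<in>I. a i i = 2) \<and>
      (\<forall>i\<in>I. \<forall>j\<in>I. i \<noteq> j \<longrightarrow> a i j \<le> 0) \<and>
      (\<forall>i\<in>I. \<forall>j\<in>I. a i j = 0 \<longleftrightarrow> a j i = 0))"

definition refl :: "'d set \<Rightarrow> ('i \<Rightarrow> 'd \<Rightarrow> int) \<Rightarrow> ('i \<Rightarrow> 'd \<Rightarrow> int) \<Rightarrow> 'i
    \<Rightarrow> ('d \<Rightarrow> int) \<Rightarrow> ('d \<Rightarrow> int)" where
  "refl D al cal i v = (\<lambda>k. v k - pair D (al i) v * cal i k)"

text \<open>The vectorial Weyl group W^v generated by the r_i (as maps on Y; since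
  each r_i is an involution, the monoid generated equals the group generated).\<close>
inductive_set weyl :: "'d set \<Rightarrow> 'i set \<Rightarrow> ('i \<Rightarrow> 'd \<Rightarrow> int) \<Rightarrow> ('i \<Rightarrow> 'd \<Rightarrow> int)
    \<Rightarrow> (('d \<Rightarrow> int) \<Rightarrow> ('d \<Rightarrow> int)) set"
  for D I al cal where
  weyl_id: "(\<lambda>v. if v \<in> lat D then v else undefined) \<in> weyl D I al cal"
| weyl_step: "w \<in> weyl D I al cal \<Longrightarrow> i \<in> I \<Longrightarrow>
     (\<lambda>v. if v \<in> lat D then refl D al cal i (w v) else undefined) \<in> weyl D I al cal"

definition Qplus :: "'i set \<Rightarrow> ('i \<Rightarrow> 'd \<Rightarrow> int) \<Rightarrow> ('d \<Rightarrow> int) set" where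
  "Qplus I cal = {y. \<exists>n :: 'i \<Rightarrow> nat. y = (\<lambda>k. \<Sum>i\<in>I. int (n i) * cal i k)}"

definition leQ :: "'i set \<Rightarrow> ('i \<Rightarrow> 'd \<Rightarrow> int) \<Rightarrow> ('d \<Rightarrow> int) \<Rightarrow> ('d \<Rightarrow> int) \<Rightarrow> bool" where
  "leQ I cal x y = ((y - x) \<in> Qplus I cal)"

definition almost_finite :: "'d set \<Rightarrow> 'i set \<Rightarrow> ('i \<Rightarrow> 'd \<Rightarrow> int) \<Rightarrow> ('d \<Rightarrow> int) set \<Rightarrow> bool" where
  "almost_finite D I cal E = (\<exists>J. finite J \<and> J \<subseteq> lat D \<and> (\<forall>e\<in>E. \<exists>j\<in>J. leQ I cal e j))"

text \<open>Formal series sum a_lambda e^lambda are modelled by their coefficient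
  functions f with f lambda = a_lambda, support contained in Y.\<close>
definition supp :: "(('d \<Rightarrow> int) \<Rightarrow> 'r::zero) \<Rightarrow> ('d \<Rightarrow> int) set" where
  "supp f = {l. f l \<noteq> 0}"

definition looijenga :: "'d set \<Rightarrow> 'i set \<Rightarrow> ('i \<Rightarrow> 'd \<Rightarrow> int)
    \<Rightarrow> ((('d \<Rightarrow> int) \<Rightarrow> 'r::zero)) set" where
  "looijenga D I cal = {f. supp f \<subseteq> lat D \<and> almost_finite D I cal (supp f)}"

definition group_alg :: "'d set \<Rightarrow> ((('d \<Rightarrow> int) \<Rightarrow> 'r::zero)) set" where
  "group_alg D = {f. supp f \<subseteq> lat D \<and> finite (supp f)}"

definition w_inv :: "'d set \<Rightarrow> 'i set \<Rightarrow> ('i \<Rightarrow> 'd \<Rightarrow> int) \<Rightarrow> ('i \<Rightarrow> 'd \<Rightarrow> int)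
    \<Rightarrow> ((('d \<Rightarrow> int) \<Rightarrow> 'r)) set \<Rightarrow> ((('d \<Rightarrow> int) \<Rightarrow> 'r)) set" where
  "w_inv D I al cal S = {f \<in> S. \<forall>w\<in>weyl D I al cal. \<forall>l\<in>lat D. f (w l) = f l}"

end

theory Submission
  imports Defs "HOL-Library.FuncSet" "HOL-Library.Function_Algebras" "Jordan_Normal_Form.Determinant"
begin

text \<open>
  The whole argument rests on the classical positivity property of the Weyl group: if
  \<open>\<ell>(w r\<^sub>s) \<ge> \<ell>(w)\<close> then \<open>w(\<alpha>\<^sub>s\<^sup>\<or>) \<in> Q\<^sup>\<or>\<^sub>+\<close>. It is proved by induction on \<open>\<ell>(w)\<close>, splitting \<open>w\<close>
  along a rank-two standard parabolic subgroup, where it reduces to an explicit computation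
  with alternating words (the coordinates grow when \<open>a\<^sub>s\<^sub>t a\<^sub>t\<^sub>s \<ge> 4\<close>, and the braid relation
  bounds the length of alternating reduced words otherwise). Two consequences follow for
  \<open>\<lambda> \<in> Y\<close> with \<open>\<alpha>\<^sub>i(\<lambda>) \<ge> 0\<close> for all \<open>i\<close>: \<open>w\<lambda> \<le> \<lambda>\<close> for every \<open>w\<close>, and if moreover all
  \<open>\<alpha>\<^sub>i(\<lambda>) \<ge> 1\<close> then the stabiliser of \<open>\<lambda>\<close> is trivial.

  If \<open>W\<^sup>v\<close> is infinite, such a \<open>\<lambda>\<close> exists because the \<open>\<alpha>\<^sub>i\<close> are free (their Gram matrix is
  nonsingular), and the indicator function of \<open>W\<^sup>v\<lambda>\<close> is an invariant element of
  \<open>\<R>[[Y]]\<close> with infinite support. If \<open>W\<^sup>v\<close> is finite and \<open>f\<close> is invariant with support below a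
  finite set \<open>J\<close>, pick for \<open>\<nu> \<in> supp f\<close> and each \<open>w\<close> some \<open>\<phi>(w) \<in> J\<close> above \<open>w\<nu>\<close>; summing
  over \<open>W\<^sup>v\<close>, where \<open>\<Sum>\<^sub>w w(\<alpha>\<^sub>i\<^sup>\<or>) = 0\<close>, confines \<open>\<phi>(1) - \<nu>\<close> to a finite interval of \<open>Q\<^sup>\<or>\<^sub>+\<close>
  depending only on \<open>\<phi>\<close>, so the support of \<open>f\<close> is finite.
\<close>

lemma sum_fun_apply: "(\<Sum>a\<in>A. f a) x = (\<Sum>a\<in>A. f a x)"
  by (induction A rule: infinite_finite_induct) auto

definition scale :: "int \<Rightarrow> ('d \<Rightarrow> int) \<Rightarrow> ('d \<Rightarrow> int)" where
  "scale c v = (\<lambda>k. c * v k)"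

lemma pair_add: "pair D x (u + v) = pair D x u + pair D x v"
  by (simp add: pair_def sum.distrib distrib_left)

lemma pair_diff: "pair D x (u - v) = pair D x u - pair D x v"
  by (simp add: pair_def sum_subtractf right_diff_distrib)

lemma pair_uminus: "pair D x (- v) = - pair D x v"
  by (simp add: pair_def sum_negf)

lemma pair_scale: "pair D x (scale c v) = c * pair D x v"
  by (simp add: pair_def scale_def sum_distrib_left algebra_simps)

lemma pair_zero: "pair D x 0 = 0"
  by (simp add: pair_def)

lemma pair_self_eq_0:
  assumes "finite D" "w \<in> lat D" "pair D w w = 0"
  shows "w = 0"
proof
  fix k
  have "\<forall>k\<in>D. w k * w k = 0"
    using assms(1,3) sum_nonneg_eq_0_iff[of D "\<lambda>k. w k * w k"] by (simp add: pair_def)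
  then show "w k = 0 k" using assms(2) by (cases "k \<in> D") (auto simp: lat_def)
qed

lemma free_family_reindex:
  assumes "free_family I v" "bij_betw e {..<n} I" "(\<lambda>k. \<Sum>j<n. y j * v (e j) k) = (\<lambda>k. 0)" "j < n"
  shows "y j = 0"
proof -
  define c where "c i = y (inv_into {..<n} e i)" for i
  have "(\<Sum>i\<in>I. c i * v i k) = (\<Sum>j<n. y j * v (e j) k)" for k
    using sum.reindex_bij_betw[OF assms(2), of "\<lambda>i. c i * v i k"] assms(2)
    by (simp add: c_def bij_betw_def inv_into_f_f)
  then have "\<forall>i\<in>I. c i = 0" using assms(1,3) unfolding free_family_def by metis
  then show ?thesis
    using assms(2,4) by (metis bij_betw_def c_def image_eqI inv_into_f_f lessThan_iff)
qed

lemma mult_adj_mat_vec: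
  fixes M :: "'a :: comm_ring_1 mat"
  assumes M: "M \<in> carrier_mat n n" and "i < n"
  shows "(M *\<^sub>v (adj_mat M *\<^sub>v vec n (\<lambda>_. det M))) $ i = det M * det M"
proof -
  have "M *\<^sub>v (adj_mat M *\<^sub>v vec n (\<lambda>_. det M)) = (det M \<cdot>\<^sub>m 1\<^sub>m n) *\<^sub>v vec n (\<lambda>_. det M)"
    using M by (simp flip: adj_mat(2)[OF M] add: assoc_mult_mat_vec[OF M adj_mat(1)[OF M]])
  moreover have "(\<Sum>j = 0..<n. det M * (if j = i then 1 else 0) * det M) = det M * det M"
    using \<open>i < n\<close> by (simp add: if_distrib[of "\<lambda>x. det M * x * det M"] sum.delta cong: if_cong)
  ultimately show ?thesis
    using \<open>i < n\<close> by (simp add: scalar_prod_def)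
qed

fun alt :: "'a \<Rightarrow> 'a \<Rightarrow> nat \<Rightarrow> 'a list" where
  "alt x y 0 = []"
| "alt x y (Suc k) = (if even k then y else x) # alt x y k"

lemma set_alt: "set (alt x y k) \<subseteq> {x, y}"
  by (induction k) auto

lemma length_alt [simp]: "length (alt x y k) = k"
  by (induction k) auto

lemma alt_add: "alt x y (n + m) = (if even m then alt x y n else alt y x n) @ alt x y m"
  by (induction n) auto

lemma alt_Suc_snoc: "alt x y (Suc k) = alt y x k @ [y]"
  using alt_add[of x y k 1] by simp

lemma alt_numeral: "alt x y (numeral n) = (if even (pred_numeral n) then y else x) # alt x y (pred_numeral n)"
  by (simp add: numeral_eq_Suc)

lemma alt_1: "alt x y 1 = [y]"
  by simp

lemma alternating_eq_alt:
  "x \<noteq> y \<Longrightarrow> set ws \<subseteq> {x, y} \<Longrightarrow> successively (\<noteq>) ws \<Longrightarrow> (ws \<noteq> [] \<Longrightarrow> last ws = y)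
    \<Longrightarrow> ws = alt x y (length ws)"
proof (induction ws)
  case (Cons a ws)
  show ?case
  proof (cases ws)
    case (Cons b ws')
    then have IH: "ws = alt x y (length ws)"
      using Cons.IH Cons.prems by (simp add: successively_Cons)
    then have "b = (if even (length ws') then y else x)"
      using \<open>ws = b # ws'\<close> by simp
    then have "a = (if even (length ws) then y else x)"
      using Cons.prems \<open>ws = b # ws'\<close> by auto
    then show ?thesis using IH by simp
  qed (use Cons.prems in simp)
qed simp

section \<open>Simple reflections, words and length\<close>

locale root_datum =
  fixes D :: "'d set" and I :: "'i set" and al cal :: "'i \<Rightarrow> 'd \<Rightarrow> int"
  assumes finite_D: "finite D" and finite_I: "finite I"
    and roots_lat: "\<forall>i\<in>I. al i \<in> lat D" and coroots_lat: "\<forall>i\<in>I. cal i \<in> lat D"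
    and free_roots: "free_family I al" and free_coroots: "free_family I cal"
    and cartan: "gen_cartan I (\<lambda>i j. pair D (al j) (cal i))"
begin

abbreviation r :: "'i \<Rightarrow> ('d \<Rightarrow> int) \<Rightarrow> ('d \<Rightarrow> int)" where
  "r \<equiv> refl D al cal"

lemma pair_root_coroot_self: "i \<in> I \<Longrightarrow> pair D (al i) (cal i) = 2"
  using cartan by (simp add: gen_cartan_def)

lemma pair_root_coroot_nonpos: "i \<in> I \<Longrightarrow> j \<in> I \<Longrightarrow> i \<noteq> j \<Longrightarrow> pair D (al i) (cal j) \<le> 0"
  using cartan by (simp add: gen_cartan_def)

lemma pair_root_coroot_eq_0_iff:
  "i \<in> I \<Longrightarrow> j \<in> I \<Longrightarrow> pair D (al i) (cal j) = 0 \<longleftrightarrow> pair D (al j) (cal i) = 0"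
  using cartan by (simp add: gen_cartan_def)

lemma refl_eq: "r i v = v - scale (pair D (al i) v) (cal i)"
  by (auto simp: refl_def scale_def fun_eq_iff)

lemma refl_add: "r i (u + v) = r i u + r i v"
  by (simp add: refl_eq pair_add scale_def fun_eq_iff algebra_simps)

lemma refl_diff: "r i (u - v) = r i u - r i v"
  by (simp add: refl_eq pair_diff scale_def fun_eq_iff algebra_simps)

lemma refl_uminus: "r i (- v) = - r i v"
  by (simp add: refl_eq pair_uminus scale_def fun_eq_iff algebra_simps)

lemma refl_scale: "r i (scale c v) = scale c (r i v)"
  by (simp only: refl_eq pair_scale) (simp add: scale_def fun_eq_iff algebra_simps)

lemma refl_zero: "r i 0 = 0"
  by (simp add: refl_eq pair_zero scale_def fun_eq_iff)

lemma refl_refl: "i \<in> I \<Longrightarrow> r i (r i v) = v"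
proof -
  assume i: "i \<in> I"
  have "pair D (al i) (r i v) = - pair D (al i) v"
    by (simp only: refl_eq pair_diff pair_scale pair_root_coroot_self[OF i])
  then show ?thesis
    by (simp only: refl_eq[of i "r i v"]) (simp add: refl_eq scale_def fun_eq_iff)
qed

lemma refl_comp_refl: "i \<in> I \<Longrightarrow> r i \<circ> r i = id"
  by (simp add: fun_eq_iff refl_refl)

lemma refl_coroot_self: "i \<in> I \<Longrightarrow> r i (cal i) = - cal i"
  by (simp add: refl_eq pair_root_coroot_self scale_def fun_eq_iff)

fun word :: "'i list \<Rightarrow> ('d \<Rightarrow> int) \<Rightarrow> ('d \<Rightarrow> int)" where
  "word [] = id"
| "word (i # ws) = r i \<circ> word ws"

lemma word_append: "word (xs @ ys) = word xs \<circ> word ys"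
  by (induction xs) auto

lemma word_add: "word ws (u + v) = word ws u + word ws v"
  by (induction ws) (simp_all only: word.simps comp_apply id_apply refl_add)

lemma word_diff: "word ws (u - v) = word ws u - word ws v"
  by (induction ws) (simp_all only: word.simps comp_apply id_apply refl_diff)

lemma word_uminus: "word ws (- v) = - word ws v"
  by (induction ws) (simp_all only: word.simps comp_apply id_apply refl_uminus)

lemma word_scale: "word ws (scale c v) = scale c (word ws v)"
  by (induction ws) (simp_all only: word.simps comp_apply id_apply refl_scale)

lemma word_zero: "word ws 0 = 0"
  by (induction ws) (simp_all only: word.simps comp_apply id_apply refl_zero)

lemma word_sum: "word ws (\<Sum>j\<in>A. scale (m j) (x j)) = (\<Sum>j\<in>A. scale (m j) (word ws (x j)))"
proof (induction A rule: infinite_finite_induct)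
  case (infinite A)
  then show ?case by (simp only: sum.infinite not_False_eq_True word_zero)
next
  case empty
  show ?case by (simp only: sum.empty word_zero)
next
  case (insert a A)
  then show ?case by (simp only: sum.insert[OF insert.hyps] word_add word_scale)
qed

lemma word_rev_word: "ws \<in> lists I \<Longrightarrow> word (rev ws) (word ws v) = v"
  by (induction ws arbitrary: v) (auto simp: word_append refl_refl)

lemma word_word_rev: "ws \<in> lists I \<Longrightarrow> word ws (word (rev ws) v) = v"
  using word_rev_word[of "rev ws"] by (simp add: in_lists_conv_set)

lemma word_eq_0_iff: "ws \<in> lists I \<Longrightarrow> word ws x = 0 \<longleftrightarrow> x = 0"
  using word_rev_word[of ws x] word_zero by metis

definition coroot_comb :: "('i \<Rightarrow> int) \<Rightarrow> ('d \<Rightarrow> int)" where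
  "coroot_comb n = (\<Sum>i\<in>I. scale (n i) (cal i))"

lemma coroot_comb_apply: "coroot_comb n k = (\<Sum>i\<in>I. n i * cal i k)"
  by (simp add: coroot_comb_def sum_fun_apply scale_def)

lemma coroot_comb_inj: "coroot_comb n = coroot_comb m \<Longrightarrow> i \<in> I \<Longrightarrow> n i = m i"
proof -
  assume eq: "coroot_comb n = coroot_comb m" and i: "i \<in> I"
  have "(\<lambda>k. \<Sum>j\<in>I. (n j - m j) * cal j k) = (\<lambda>k. 0)"
    using fun_cong[OF eq]
    by (simp add: coroot_comb_apply left_diff_distrib sum_subtractf fun_eq_iff)
  then show ?thesis
    using free_coroots i unfolding free_family_def by fastforce
qed

lemma coroot_comb_add: "coroot_comb n + coroot_comb m = coroot_comb (\<lambda>i. n i + m i)"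
  by (simp add: coroot_comb_apply fun_eq_iff sum.distrib distrib_right)

lemma coroot_comb_zero: "coroot_comb (\<lambda>i. 0) = 0"
  by (simp add: coroot_comb_apply fun_eq_iff)

lemma coroot_eq_coroot_comb:
  assumes "i \<in> I"
  shows "cal i = coroot_comb (\<lambda>j. of_bool (j = i))"
proof -
  have "I \<inter> {j. j = i} = {i}" using assms by auto
  then show ?thesis using finite_I by (simp add: coroot_comb_apply fun_eq_iff)
qed

lemma coroot_nonzero: "i \<in> I \<Longrightarrow> cal i \<noteq> 0"
  using coroot_comb_inj[of "\<lambda>j. of_bool (j = i)" "\<lambda>j. 0" i] coroot_eq_coroot_comb[of i]
    coroot_comb_zero by auto

lemma word_coroot_comb: "word ws (coroot_comb n) = (\<Sum>i\<in>I. scale (n i) (word ws (cal i)))"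
  by (simp add: coroot_comb_def word_sum)

lemma Qplus_iff: "b \<in> Qplus I cal \<longleftrightarrow> (\<exists>n. (\<forall>i\<in>I. 0 \<le> n i) \<and> b = coroot_comb n)"
proof
  assume "b \<in> Qplus I cal"
  then obtain n :: "'i \<Rightarrow> nat" where "b = (\<lambda>k. \<Sum>i\<in>I. int (n i) * cal i k)"
    unfolding Qplus_def by blast
  then show "\<exists>n. (\<forall>i\<in>I. 0 \<le> n i) \<and> b = coroot_comb n"
    by (intro exI[of _ "\<lambda>i. int (n i)"]) (simp add: coroot_comb_apply fun_eq_iff)
next
  assume "\<exists>n. (\<forall>i\<in>I. 0 \<le> n i) \<and> b = coroot_comb n"
  then obtain n where n: "\<forall>i\<in>I. 0 \<le> n i" "b = coroot_comb n" by blast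
  then have "b = (\<lambda>k. \<Sum>i\<in>I. int (nat (n i)) * cal i k)"
    by (simp add: coroot_comb_apply fun_eq_iff)
  then show "b \<in> Qplus I cal" unfolding Qplus_def by (intro CollectI exI)
qed

lemma Qplus_add:
  assumes "u \<in> Qplus I cal" "v \<in> Qplus I cal"
  shows "u + v \<in> Qplus I cal"
proof -
  obtain n m where "\<forall>i\<in>I. 0 \<le> n i" "u = coroot_comb n" "\<forall>i\<in>I. 0 \<le> m i" "v = coroot_comb m"
    using assms unfolding Qplus_iff by blast
  then show ?thesis
    unfolding Qplus_iff by (intro exI[of _ "\<lambda>i. n i + m i"]) (simp add: coroot_comb_add)
qed

lemma Qplus_sum: "(\<And>a. a \<in> A \<Longrightarrow> f a \<in> Qplus I cal) \<Longrightarrow> (\<Sum>a\<in>A. f a) \<in> Qplus I cal"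
proof (induction A rule: infinite_finite_induct)
  case (infinite A)
  then show ?case unfolding Qplus_iff by (auto intro: exI[of _ "\<lambda>i. 0"] simp: coroot_comb_zero)
next
  case empty
  then show ?case unfolding Qplus_iff by (auto intro: exI[of _ "\<lambda>i. 0"] simp: coroot_comb_zero)
next
  case (insert a A)
  then have "f a \<in> Qplus I cal" "sum f A \<in> Qplus I cal" by auto
  then show ?case by (simp only: sum.insert[OF insert.hyps] Qplus_add)
qed

lemma Qplus_scale:
  assumes "0 \<le> c" "u \<in> Qplus I cal"
  shows "scale c u \<in> Qplus I cal"
proof -
  obtain n where "\<forall>i\<in>I. 0 \<le> n i" "u = coroot_comb n"
    using assms(2) unfolding Qplus_iff by blast
  moreover have "scale c (coroot_comb n) = coroot_comb (\<lambda>i. c * n i)"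
    by (simp add: coroot_comb_apply scale_def fun_eq_iff sum_distrib_left mult.assoc)
  ultimately show ?thesis
    unfolding Qplus_iff using assms(1) by (intro exI[of _ "\<lambda>i. c * n i"]) simp
qed

lemma coroot_in_Qplus: "i \<in> I \<Longrightarrow> cal i \<in> Qplus I cal"
  unfolding Qplus_iff using coroot_eq_coroot_comb by (auto intro!: exI[of _ "\<lambda>j. of_bool (j = i)"])

lemma zero_in_Qplus: "0 \<in> Qplus I cal"
  using Qplus_sum[of "{}"] by simp

lemma Qplus_sum_eq_0: "u \<in> Qplus I cal \<Longrightarrow> v \<in> Qplus I cal \<Longrightarrow> u + v = 0 \<Longrightarrow> v = 0"
proof -
  assume "u \<in> Qplus I cal" "v \<in> Qplus I cal" and sum0: "u + v = 0"
  then obtain n m where n: "\<forall>i\<in>I. 0 \<le> n i" "u = coroot_comb n"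
    and m: "\<forall>i\<in>I. 0 \<le> m i" "v = coroot_comb m"
    unfolding Qplus_iff by blast
  have "coroot_comb (\<lambda>i. n i + m i) = coroot_comb (\<lambda>i. 0)"
    using sum0 n m by (simp add: coroot_comb_add coroot_comb_zero)
  then have "\<forall>i\<in>I. m i = 0" using n m coroot_comb_inj by fastforce
  then show "v = 0" using m by (simp add: coroot_comb_apply fun_eq_iff)
qed

definition parabolic :: "'i set \<Rightarrow> (('d \<Rightarrow> int) \<Rightarrow> ('d \<Rightarrow> int)) set" where
  "parabolic K = word ` lists K"

definition wlen :: "'i set \<Rightarrow> (('d \<Rightarrow> int) \<Rightarrow> ('d \<Rightarrow> int)) \<Rightarrow> nat" where
  "wlen K g = (LEAST n. \<exists>ws\<in>lists K. length ws = n \<and> word ws = g)"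

definition reduced :: "'i set \<Rightarrow> 'i list \<Rightarrow> bool" where
  "reduced K ws \<longleftrightarrow> ws \<in> lists K \<and> length ws = wlen K (word ws)"

lemma obtain_reduced_word:
  assumes "g \<in> parabolic K"
  obtains ws where "reduced K ws" "word ws = g"
proof -
  have "\<exists>n. \<exists>ws\<in>lists K. length ws = n \<and> word ws = g"
    using assms unfolding parabolic_def by blast
  from LeastI_ex[OF this] show ?thesis
    using that unfolding reduced_def wlen_def by blast
qed

lemma wlen_word_le: "ws \<in> lists K \<Longrightarrow> wlen K (word ws) \<le> length ws"
  unfolding wlen_def by (rule Least_le) auto

lemma word_in_parabolic: "ws \<in> lists K \<Longrightarrow> word ws \<in> parabolic K"
  unfolding parabolic_def by blast

lemma parabolic_comp: "g \<in> parabolic K \<Longrightarrow> h \<in> parabolic K \<Longrightarrow> g \<circ> h \<in> parabolic K"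
  unfolding parabolic_def by (auto simp flip: word_append intro!: imageI)

lemma refl_in_parabolic: "s \<in> K \<Longrightarrow> r s \<in> parabolic K"
  using word_in_parabolic[of "[s]" K] by simp

lemma id_in_parabolic: "id \<in> parabolic K"
  using word_in_parabolic[of "[]" K] by simp

lemma parabolic_mono: "K \<subseteq> K' \<Longrightarrow> g \<in> parabolic K \<Longrightarrow> g \<in> parabolic K'"
  unfolding parabolic_def by (auto intro: lists_mono[THEN subsetD])

lemma wlen_antimono: "K \<subseteq> K' \<Longrightarrow> g \<in> parabolic K \<Longrightarrow> wlen K' g \<le> wlen K g"
  by (metis obtain_reduced_word reduced_def lists_mono subsetD wlen_word_le)

lemma wlen_comp: "g \<in> parabolic K \<Longrightarrow> h \<in> parabolic K \<Longrightarrow> wlen K (g \<circ> h) \<le> wlen K g + wlen K h"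
proof -
  assume "g \<in> parabolic K" "h \<in> parabolic K"
  then obtain ws vs where "reduced K ws" "word ws = g" "reduced K vs" "word vs = h"
    by (metis obtain_reduced_word)
  then show ?thesis
    using wlen_word_le[of "ws @ vs" K] by (simp add: reduced_def word_append)
qed

lemma wlen_refl_le: "s \<in> K \<Longrightarrow> wlen K (r s) \<le> 1"
  using wlen_word_le[of "[s]" K] by simp

lemma wlen_eq_0: "g \<in> parabolic K \<Longrightarrow> wlen K g = 0 \<Longrightarrow> g = id"
  by (metis obtain_reduced_word reduced_def length_0_conv word.simps(1))

lemma refl_neq_id: "s \<in> I \<Longrightarrow> r s \<noteq> id"
proof
  assume s: "s \<in> I" and "r s = id"
  then have "cal s = - cal s" using refl_coroot_self[OF s] by simp
  then have "cal s = 0" by (simp add: fun_eq_iff)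
  with coroot_nonzero[OF s] show False by simp
qed

lemma wlen_refl: "s \<in> K \<Longrightarrow> K \<subseteq> I \<Longrightarrow> wlen K (r s) = 1"
  using wlen_refl_le[of s K] wlen_eq_0[OF refl_in_parabolic, of s K] refl_neq_id[of s]
  by fastforce

lemma parabolic_add: "g \<in> parabolic K \<Longrightarrow> g (u + v) = g u + g v"
  unfolding parabolic_def using word_add by blast

lemma parabolic_scale: "g \<in> parabolic K \<Longrightarrow> g (scale c u) = scale c (g u)"
  unfolding parabolic_def using word_scale by blast

lemma parabolic_uminus: "g \<in> parabolic K \<Longrightarrow> g (- u) = - g u"
  unfolding parabolic_def using word_uminus by blast

lemma reduced_append: "reduced K (xs @ ys) \<Longrightarrow> reduced K xs \<and> reduced K ys"
proof -
  assume red: "reduced K (xs @ ys)"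
  then have "xs \<in> lists K" "ys \<in> lists K" by (auto simp: reduced_def)
  then have "length xs + length ys \<le> wlen K (word xs) + wlen K (word ys)"
    using red wlen_comp[OF word_in_parabolic word_in_parabolic, of xs K ys]
    by (simp add: reduced_def word_append)
  then show ?thesis
    using \<open>xs \<in> lists K\<close> \<open>ys \<in> lists K\<close> wlen_word_le[of xs K] wlen_word_le[of ys K]
    by (simp add: reduced_def)
qed

lemma reduced_successively_neq: "reduced K ws \<Longrightarrow> K \<subseteq> I \<Longrightarrow> successively (\<noteq>) ws"
proof (induction ws rule: induct_list012)
  case (3 a b ws)
  have "a \<noteq> b"
  proof
    assume "a = b"
    then have "word (a # b # ws) = word ws"
      using 3 by (auto simp: reduced_def fun_eq_iff refl_refl)
    moreover have "ws \<in> lists K" using "3.prems" by (simp add: reduced_def)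
    ultimately show False
      using "3.prems" wlen_word_le[of ws K] by (simp add: reduced_def)
  qed
  moreover have "reduced K (b # ws)" using reduced_append[of K "[a]" "b # ws"] "3.prems" by simp
  ultimately show ?case using 3 by simp
qed simp_all

lemma wlen_comp_refl_less:
  assumes "reduced K (ws @ [s])" "K \<subseteq> I"
  shows "wlen K (word (ws @ [s]) \<circ> r s) < wlen K (word (ws @ [s]))"
proof -
  have "s \<in> I" "ws \<in> lists K" using assms by (auto simp: reduced_def)
  then have "word (ws @ [s]) \<circ> r s = word ws"
    by (simp add: word_append comp_assoc refl_comp_refl)
  then show ?thesis
    using assms(1) wlen_word_le[OF \<open>ws \<in> lists K\<close>] by (simp add: reduced_def)
qed

end

section \<open>Rank two\<close>

locale dihedral = root_datum D I al cal
  for D :: "'d set" and I :: "'i set" and al cal :: "'i \<Rightarrow> 'd \<Rightarrow> int" +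
  fixes s t :: 'i
  assumes s_in_I: "s \<in> I" and t_in_I: "t \<in> I" and s_neq_t: "s \<noteq> t"
begin

definition c_st :: int where "c_st = - pair D (al t) (cal s)"
definition c_ts :: int where "c_ts = - pair D (al s) (cal t)"

lemma c_st_nonneg: "0 \<le> c_st"
  using pair_root_coroot_nonpos[OF t_in_I s_in_I] s_neq_t by (simp add: c_st_def)

lemma c_ts_nonneg: "0 \<le> c_ts"
  using pair_root_coroot_nonpos[OF s_in_I t_in_I s_neq_t] by (simp add: c_ts_def)

lemma c_st_eq_0_iff: "c_st = 0 \<longleftrightarrow> c_ts = 0"
  using pair_root_coroot_eq_0_iff[OF s_in_I t_in_I] by (simp add: c_st_def c_ts_def)

text \<open>On the coset \<open>v + \<int>\<alpha>\<^sub>s\<^sup>\<or> + \<int>\<alpha>\<^sub>t\<^sup>\<or>\<close> the reflections \<open>r\<^sub>s\<close>, \<open>r\<^sub>t\<close> act by the affine maps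
  \<open>coord_step p q\<close> on coordinates, where \<open>p = \<alpha>\<^sub>s(v)\<close> and \<open>q = \<alpha>\<^sub>t(v)\<close>.\<close>

definition shift :: "('d \<Rightarrow> int) \<Rightarrow> int \<Rightarrow> int \<Rightarrow> ('d \<Rightarrow> int)" where
  "shift v X Y = v + scale X (cal s) + scale Y (cal t)"

definition coord_step :: "int \<Rightarrow> int \<Rightarrow> 'i \<Rightarrow> int \<times> int \<Rightarrow> int \<times> int" where
  "coord_step p q i xy =
    (if i = s then (c_ts * snd xy - fst xy - p, snd xy) else (fst xy, c_st * fst xy - snd xy - q))"

lemma coord_step_s: "coord_step p q s (x, y) = (c_ts * y - x - p, y)"
  by (simp add: coord_step_def)

lemma coord_step_t: "coord_step p q t (x, y) = (x, c_st * x - y - q)"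
  using s_neq_t by (simp add: coord_step_def)

lemma refl_s_shift: "r s (shift v X Y) = shift v (c_ts * Y - X - pair D (al s) v) Y"
proof -
  have "pair D (al s) (shift v X Y) = pair D (al s) v + 2 * X - c_ts * Y"
    using pair_root_coroot_self[OF s_in_I] by (simp add: shift_def pair_add pair_scale c_ts_def)
  then show ?thesis
    by (simp only: refl_eq) (simp add: shift_def scale_def fun_eq_iff algebra_simps)
qed

lemma refl_t_shift: "r t (shift v X Y) = shift v X (c_st * X - Y - pair D (al t) v)"
proof -
  have "pair D (al t) (shift v X Y) = pair D (al t) v - c_st * X + 2 * Y"
    using pair_root_coroot_self[OF t_in_I] by (simp add: shift_def pair_add pair_scale c_st_def)
  then show ?thesis
    by (simp only: refl_eq) (simp add: shift_def scale_def fun_eq_iff algebra_simps)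
qed

lemma refl_shift:
  "i \<in> {s, t} \<Longrightarrow> r i (shift v X Y) =
    shift v (fst (coord_step (pair D (al s) v) (pair D (al t) v) i (X, Y)))
            (snd (coord_step (pair D (al s) v) (pair D (al t) v) i (X, Y)))"
  by (auto simp: refl_s_shift refl_t_shift coord_step_s coord_step_t)

lemma word_shift:
  "set ws \<subseteq> {s, t} \<Longrightarrow> word ws (shift v X Y) =
    shift v (fst (foldr (coord_step (pair D (al s) v) (pair D (al t) v)) ws (X, Y)))
            (snd (foldr (coord_step (pair D (al s) v) (pair D (al t) v)) ws (X, Y)))"
  by (induction ws) (simp_all add: refl_shift)

lemma shift_0_0: "shift v 0 0 = v"
  by (simp add: shift_def scale_def fun_eq_iff)

lemma braid_relation_if_coords:
  assumes "\<And>p q. foldr (coord_step p q) (alt s t m) (0, 0) = foldr (coord_step p q) (alt t s m) (0, 0)"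
  shows "word (alt s t m) = word (alt t s m)"
proof
  fix v
  have "word (alt s t m) (shift v 0 0) = word (alt t s m) (shift v 0 0)"
    using set_alt[of s t m] set_alt[of t s m] by (simp add: word_shift assms insert_commute)
  then show "word (alt s t m) v = word (alt t s m) v" by (simp add: shift_0_0)
qed

definition coords :: "nat \<Rightarrow> int \<times> int" where
  "coords k = foldr (coord_step 0 0) (alt s t k) (1, 0)"

lemma word_alt_coroot: "word (alt s t k) (cal s) = shift 0 (fst (coords k)) (snd (coords k))"
proof -
  have "cal s = shift 0 1 0" by (simp add: shift_def scale_def fun_eq_iff)
  then show ?thesis using set_alt[of s t k] by (simp add: word_shift pair_zero coords_def)
qed

lemma coords_0: "coords 0 = (1, 0)"
  by (simp add: coords_def)

lemma coords_Suc:
  "coords (Suc k) = (if even k then (fst (coords k), c_st * fst (coords k) - snd (coords k))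
                     else (c_ts * snd (coords k) - fst (coords k), snd (coords k)))"
  by (cases "coords k") (simp add: coords_def coord_step_s coord_step_t)

lemma coords_growth:
  assumes "4 \<le> c_st * c_ts"
  shows "0 \<le> fst (coords k) \<and> 0 \<le> snd (coords k)
    \<and> (even k \<longrightarrow> 2 * snd (coords k) \<le> c_st * fst (coords k))
    \<and> (odd k \<longrightarrow> 2 * fst (coords k) \<le> c_ts * snd (coords k))"
proof (induction k)
  case 0
  then show ?case using c_st_nonneg by (simp add: coords_0)
next
  case (Suc k)
  obtain x y where xy: "coords k = (x, y)" by fastforce
  with Suc.IH have "0 \<le> x" "0 \<le> y" by auto
  show ?case
  proof (cases "even k")
    case True
    with Suc.IH xy have "2 * y \<le> c_st * x" by simp
    then have "c_ts * (2 * y) \<le> c_ts * (c_st * x)" using c_ts_nonneg by (rule mult_left_mono)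
    moreover have "4 * x \<le> (c_st * c_ts) * x" using assms \<open>0 \<le> x\<close> by (rule mult_right_mono)
    ultimately have "2 * x \<le> c_ts * (c_st * x - y)" by (simp add: algebra_simps)
    then show ?thesis
      using True xy \<open>0 \<le> x\<close> \<open>0 \<le> y\<close> \<open>2 * y \<le> c_st * x\<close> by (simp add: coords_Suc)
  next
    case False
    with Suc.IH xy have "2 * x \<le> c_ts * y" by simp
    then have "c_st * (2 * x) \<le> c_st * (c_ts * y)" using c_st_nonneg by (rule mult_left_mono)
    moreover have "4 * y \<le> (c_st * c_ts) * y" using assms \<open>0 \<le> y\<close> by (rule mult_right_mono)
    ultimately have "2 * y \<le> c_st * (c_ts * y - x)" by (simp add: algebra_simps)
    then show ?thesis
      using False xy \<open>0 \<le> x\<close> \<open>0 \<le> y\<close> \<open>2 * x \<le> c_ts * y\<close> by (simp add: coords_Suc)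
  qed
qed

lemma finite_type_cases:
  assumes "c_st * c_ts < 4"
  shows "(c_st = 0 \<and> c_ts = 0) \<or> (c_st = 1 \<and> c_ts = 1) \<or> (c_st = 1 \<and> c_ts = 2) \<or> (c_st = 2 \<and> c_ts = 1)
    \<or> (c_st = 1 \<and> c_ts = 3) \<or> (c_st = 3 \<and> c_ts = 1)"
proof -
  have "c_st \<le> 3"
  proof (rule ccontr)
    assume "\<not> c_st \<le> 3"
    then have "4 \<le> c_st" "1 \<le> c_ts" using c_st_eq_0_iff c_ts_nonneg by auto
    then have "4 * 1 \<le> c_st * c_ts" by (intro mult_mono) auto
    with assms show False by simp
  qed
  moreover have "c_ts \<le> 3"
  proof (rule ccontr)
    assume "\<not> c_ts \<le> 3"
    then have "1 \<le> c_st" "4 \<le> c_ts" using c_st_eq_0_iff c_st_nonneg by auto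
    then have "1 * 4 \<le> c_st * c_ts" by (intro mult_mono) auto
    with assms show False by simp
  qed
  then have "c_st = 0 \<or> c_st = 1 \<or> c_st = 2 \<or> c_st = 3"
    "c_ts = 0 \<or> c_ts = 1 \<or> c_ts = 2 \<or> c_ts = 3"
    using \<open>c_st \<le> 3\<close> c_st_nonneg c_ts_nonneg by presburger+
  then show ?thesis using assms c_st_eq_0_iff by (elim disjE) simp_all
qed

text \<open>The order of \<open>r\<^sub>s r\<^sub>t\<close> in the finite types \<open>A\<^sub>1 \<times> A\<^sub>1\<close>, \<open>A\<^sub>2\<close>, \<open>B\<^sub>2\<close>, \<open>G\<^sub>2\<close>.\<close>

definition braid_length :: nat where
  "braid_length = (if c_st = 0 then 2 else if c_st * c_ts = 1 then 3 else if c_st * c_ts = 2 then 4 else 6)"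

lemma braid_relation:
  assumes "c_st * c_ts < 4"
  shows "word (alt s t braid_length) = word (alt t s braid_length)"
proof (rule braid_relation_if_coords)
  fix p q
  show "foldr (coord_step p q) (alt s t braid_length) (0, 0)
      = foldr (coord_step p q) (alt t s braid_length) (0, 0)"
    using finite_type_cases[OF assms] s_neq_t
    by (elim disjE) (simp_all add: braid_length_def coord_step_s coord_step_t alt_numeral alt_1)
qed

lemma coords_nonneg_finite_type:
  assumes "c_st * c_ts < 4" "k < braid_length"
  shows "0 \<le> fst (coords k) \<and> 0 \<le> snd (coords k)"
proof -
  have "k \<in> {0, 1, 2, 3, 4, 5}" using assms(2) by (auto simp: braid_length_def split: if_splits)
  then show ?thesis
    using finite_type_cases[OF assms(1)] assms(2)
    by (elim insertE disjE)
      (simp_all add: braid_length_def coords_def alt_numeral alt_1 coord_step_s coord_step_t)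
qed

lemma reduced_alt_of_wlen_le:
  assumes "v \<in> parabolic {s, t}" "wlen {s, t} v \<le> wlen {s, t} (v \<circ> r s)"
  obtains k where "reduced {s, t} (alt s t k)" "word (alt s t k) = v"
proof -
  obtain ws where ws: "reduced {s, t} ws" "word ws = v" using assms(1) by (rule obtain_reduced_word)
  have st_I: "{s, t} \<subseteq> I" using s_in_I t_in_I by simp
  have "last ws = t" if "ws \<noteq> []"
  proof (rule ccontr)
    assume "last ws \<noteq> t"
    moreover have "last ws \<in> {s, t}" using ws(1) that by (auto simp: reduced_def)
    ultimately have split: "ws = butlast ws @ [s]"
      using that by (metis append_butlast_last_id insertE singletonD)
    have "wlen {s, t} (word (butlast ws @ [s]) \<circ> r s) < wlen {s, t} (word (butlast ws @ [s]))"
      using ws(1) split by (intro wlen_comp_refl_less[OF _ st_I]) simp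
    then show False using assms(2) ws(2) split by simp
  qed
  moreover have "set ws \<subseteq> {s, t}" using ws(1) by (auto simp: reduced_def)
  ultimately have "ws = alt s t (length ws)"
    using alternating_eq_alt[OF s_neq_t] reduced_successively_neq[OF ws(1) st_I] by blast
  then show ?thesis using that ws by metis
qed

lemma reduced_alt_shorter_than_braid:
  assumes red: "reduced {s, t} (alt s t k)"
    and braid: "word (alt s t m) = word (alt t s m)" and "0 < m"
    and le: "wlen {s, t} (word (alt s t k)) \<le> wlen {s, t} (word (alt s t k) \<circ> r s)"
  shows "k < m"
proof (rule ccontr)
  assume "\<not> k < m"
  then obtain n where k: "k = n + m" by (metis add.commute le_add_diff_inverse not_less)
  obtain m' where m: "m = Suc m'" using \<open>0 < m\<close> by (cases m) auto
  define P where "P = (if even m then alt s t n else alt t s n)"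
  have P: "alt s t k = P @ alt s t m" "set P \<subseteq> {s, t}" "length P = n"
    using alt_add[of s t n m] set_alt[of s t n] set_alt[of t s n]
    by (auto simp: k P_def insert_commute)
  have "alt t s m = alt s t m' @ [s]" by (simp only: m alt_Suc_snoc)
  then have "word (alt s t k) = word (P @ alt s t m') \<circ> r s"
    by (simp add: P(1) word_append braid comp_assoc)
  then have "word (alt s t k) \<circ> r s = word (P @ alt s t m')"
    using s_in_I by (simp add: comp_assoc refl_comp_refl)
  moreover have "P @ alt s t m' \<in> lists {s, t}"
    using P(2) set_alt[of s t m'] by auto
  ultimately have "wlen {s, t} (word (alt s t k) \<circ> r s) \<le> n + m'"
    using wlen_word_le P(3) by (metis length_alt length_append)
  moreover have "wlen {s, t} (word (alt s t k)) = k" using red by (simp add: reduced_def)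
  ultimately show False using le k m by linarith
qed

lemma coroot_image_nonneg:
  assumes "v \<in> parabolic {s, t}" "wlen {s, t} v \<le> wlen {s, t} (v \<circ> r s)"
  obtains X Y where "0 \<le> X" "0 \<le> Y" "v (cal s) = scale X (cal s) + scale Y (cal t)"
proof -
  obtain k where k: "reduced {s, t} (alt s t k)" "word (alt s t k) = v"
    using assms by (rule reduced_alt_of_wlen_le)
  have "0 \<le> fst (coords k) \<and> 0 \<le> snd (coords k)"
  proof (cases "4 \<le> c_st * c_ts")
    case True
    then show ?thesis using coords_growth by blast
  next
    case False
    have "0 < braid_length" by (simp add: braid_length_def)
    with False have "k < braid_length"
      using reduced_alt_shorter_than_braid[OF k(1) braid_relation] k(2) assms(2) by simp
    with False show ?thesis using coords_nonneg_finite_type by simp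
  qed
  then show ?thesis
    using word_alt_coroot[of k] k(2)
    by (intro that[of "fst (coords k)" "snd (coords k)"]) (simp_all add: shift_def)
qed

end

section \<open>Positivity and dominant elements\<close>

context root_datum
begin

lemma wlen_comp_parabolic_le:
  "J \<subseteq> I \<Longrightarrow> x \<in> parabolic I \<Longrightarrow> y \<in> parabolic J \<Longrightarrow> wlen I (x \<circ> y) \<le> wlen I x + wlen J y"
  using wlen_comp[OF _ parabolic_mono] wlen_antimono by (meson add_left_mono order_trans)

lemma exists_descent:
  assumes "g \<in> parabolic I" "g \<noteq> id"
  obtains t where "t \<in> I" "wlen I (g \<circ> r t) < wlen I g"
proof -
  obtain ws where ws: "reduced I ws" "word ws = g" using assms(1) by (rule obtain_reduced_word)
  with assms(2) obtain ws' t where "ws = ws' @ [t]" by (cases ws rule: rev_cases) auto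
  with ws show ?thesis
    using that wlen_comp_refl_less[of I ws' t] by (auto simp: reduced_def)
qed

text \<open>Among all factorizations \<open>g = u v\<close> with \<open>v \<in> W\<^sub>J\<close> and additive length, one with \<open>u\<close>
  of minimal length has no descent in \<open>J\<close>: a descent \<open>t\<close> could be moved from \<open>u\<close> to \<open>v\<close>.\<close>

lemma minimal_parabolic_factorization:
  assumes J: "J \<subseteq> I" and fact0: "u0 \<in> parabolic I" "v0 \<in> parabolic J" "g = u0 \<circ> v0"
    "wlen I g = wlen I u0 + wlen J v0"
  obtains u v where "u \<in> parabolic I" "v \<in> parabolic J" "g = u \<circ> v"
    "wlen I g = wlen I u + wlen J v" "wlen I u \<le> wlen I u0"
    "\<And>t. t \<in> J \<Longrightarrow> wlen I u \<le> wlen I (u \<circ> r t)"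
proof -
  define A where "A = {(u, v). u \<in> parabolic I \<and> v \<in> parabolic J \<and> g = u \<circ> v
    \<and> wlen I g = wlen I u + wlen J v}"
  have "(u0, v0) \<in> A" using fact0 by (simp add: A_def)
  then obtain uv where "uv \<in> A" and min: "\<And>uv'. uv' \<in> A \<Longrightarrow> wlen I (fst uv) \<le> wlen I (fst uv')"
    using ex_has_least_nat[of "\<lambda>uv. uv \<in> A" "(u0, v0)" "\<lambda>uv. wlen I (fst uv)"] by blast
  obtain u v where [simp]: "uv = (u, v)" by fastforce
  have u: "u \<in> parabolic I" and v: "v \<in> parabolic J" and g: "g = u \<circ> v"
    and len: "wlen I g = wlen I u + wlen J v"
    using \<open>uv \<in> A\<close> by (auto simp: A_def)
  have "wlen I u \<le> wlen I (u \<circ> r t)" if t: "t \<in> J" for t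
  proof (rule ccontr)
    assume less: "\<not> wlen I u \<le> wlen I (u \<circ> r t)"
    have tI: "t \<in> I" using t J by auto
    have u': "u \<circ> r t \<in> parabolic I" and v': "r t \<circ> v \<in> parabolic J"
      using u v t tI by (auto intro: parabolic_comp refl_in_parabolic)
    have g': "g = (u \<circ> r t) \<circ> (r t \<circ> v)"
      using g tI by (simp add: fun_eq_iff refl_refl)
    have "wlen J (r t \<circ> v) \<le> 1 + wlen J v"
      using wlen_comp[OF refl_in_parabolic[OF t] v] wlen_refl_le[OF t] by simp
    moreover have "wlen I g \<le> wlen I (u \<circ> r t) + wlen J (r t \<circ> v)"
      using wlen_comp_parabolic_le[OF J u' v'] g' by simp
    ultimately have "(u \<circ> r t, r t \<circ> v) \<in> A"
      using less len u' v' g' by (simp add: A_def)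
    from min[OF this] less show False by simp
  qed
  then show ?thesis
    using that u v g len min[OF \<open>(u0, v0) \<in> A\<close>] by simp
qed

lemma parabolic_descent:
  assumes g: "g \<in> parabolic I" and st: "s \<in> I" "t \<in> I"
    and s: "wlen I g \<le> wlen I (g \<circ> r s)" and t: "wlen I (g \<circ> r t) < wlen I g"
  obtains u v where "u \<in> parabolic I" "v \<in> parabolic {s, t}" "g = u \<circ> v" "wlen I u < wlen I g"
    "wlen I u \<le> wlen I (u \<circ> r s)" "wlen I u \<le> wlen I (u \<circ> r t)"
    "wlen {s, t} v \<le> wlen {s, t} (v \<circ> r s)"
proof -
  have J: "{s, t} \<subseteq> I" using st by simp
  have gt: "g \<circ> r t \<in> parabolic I" using g st by (simp add: parabolic_comp refl_in_parabolic)
  have g_eq: "g = (g \<circ> r t) \<circ> r t" using st by (simp add: fun_eq_iff refl_refl)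
  then have "wlen I g \<le> wlen I (g \<circ> r t) + 1"
    using wlen_comp[OF gt refl_in_parabolic[OF \<open>t \<in> I\<close>]] wlen_refl_le[OF \<open>t \<in> I\<close>] by simp
  then have "wlen I g = wlen I (g \<circ> r t) + wlen {s, t} (r t)"
    using t wlen_refl[of t "{s, t}"] J by simp
  then obtain u v where u: "u \<in> parabolic I" and v: "v \<in> parabolic {s, t}" and g_uv: "g = u \<circ> v"
    and len: "wlen I g = wlen I u + wlen {s, t} v" and short: "wlen I u \<le> wlen I (g \<circ> r t)"
    and min: "\<And>i. i \<in> {s, t} \<Longrightarrow> wlen I u \<le> wlen I (u \<circ> r i)"
    using minimal_parabolic_factorization[OF J gt refl_in_parabolic g_eq] by blast
  have "wlen {s, t} v \<le> wlen {s, t} (v \<circ> r s)"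
  proof (rule ccontr)
    assume "\<not> ?thesis"
    moreover have "wlen I (g \<circ> r s) \<le> wlen I u + wlen {s, t} (v \<circ> r s)"
      using wlen_comp_parabolic_le[OF J u parabolic_comp[OF v refl_in_parabolic]] g_uv
      by (simp add: comp_assoc)
    ultimately show False using s len by simp
  qed
  then show ?thesis using that u v g_uv short t min by simp
qed

text \<open>Write \<open>g = u v\<close> with \<open>v\<close> in the parabolic subgroup generated by \<open>r\<^sub>s\<close> and a right
  descent \<open>r\<^sub>t\<close> of \<open>g\<close>; then \<open>v(\<alpha>\<^sub>s\<^sup>\<or>) \<in> \<nat>\<alpha>\<^sub>s\<^sup>\<or> + \<nat>\<alpha>\<^sub>t\<^sup>\<or>\<close> by the rank-two computation, and \<open>u\<close> is
  shorter than \<open>g\<close> and sends \<open>\<alpha>\<^sub>s\<^sup>\<or>\<close>, \<open>\<alpha>\<^sub>t\<^sup>\<or>\<close> into \<open>Q\<^sup>\<or>\<^sub>+\<close> by induction.\<close>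

theorem coroot_image_in_Qplus:
  "g \<in> parabolic I \<Longrightarrow> s \<in> I \<Longrightarrow> wlen I g \<le> wlen I (g \<circ> r s) \<Longrightarrow> g (cal s) \<in> Qplus I cal"
proof (induction "wlen I g" arbitrary: g s rule: less_induct)
  case less
  show ?case
  proof (cases "g = id")
    case True
    then show ?thesis using coroot_in_Qplus less.prems by simp
  next
    case False
    obtain t where t: "t \<in> I" "wlen I (g \<circ> r t) < wlen I g"
      using exists_descent[OF less.prems(1) False] by blast
    then have "s \<noteq> t" using less.prems by auto
    then interpret dihedral D I al cal s t
      using less.prems t by unfold_locales auto
    obtain u v where u: "u \<in> parabolic I" "wlen I u < wlen I g"
      "wlen I u \<le> wlen I (u \<circ> r s)" "wlen I u \<le> wlen I (u \<circ> r t)"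
      and v: "v \<in> parabolic {s, t}" "wlen {s, t} v \<le> wlen {s, t} (v \<circ> r s)" and "g = u \<circ> v"
      using parabolic_descent[OF less.prems(1,2) t(1) less.prems(3) t(2)] by blast
    obtain X Y where XY: "0 \<le> X" "0 \<le> Y" "v (cal s) = scale X (cal s) + scale Y (cal t)"
      using v by (rule coroot_image_nonneg)
    have "g (cal s) = u (v (cal s))" using \<open>g = u \<circ> v\<close> by simp
    also have "\<dots> = scale X (u (cal s)) + scale Y (u (cal t))"
      by (simp only: XY(3) parabolic_add[OF u(1)] parabolic_scale[OF u(1)])
    finally have "g (cal s) = scale X (u (cal s)) + scale Y (u (cal t))" .
    moreover have "u (cal s) \<in> Qplus I cal" "u (cal t) \<in> Qplus I cal"
      using less.hyps u less.prems(2) t(1) by blast+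
    ultimately show ?thesis
      using XY(1,2) by (simp add: Qplus_add Qplus_scale)
  qed
qed

definition dominant :: "('d \<Rightarrow> int) \<Rightarrow> bool" where
  "dominant l \<longleftrightarrow> (\<forall>i\<in>I. 0 \<le> pair D (al i) l)"

definition strictly_dominant :: "('d \<Rightarrow> int) \<Rightarrow> bool" where
  "strictly_dominant l \<longleftrightarrow> (\<forall>i\<in>I. 1 \<le> pair D (al i) l)"

lemma word_snoc_minus: "l - word (ws @ [t]) l = (l - word ws l) + scale (pair D (al t) l) (word ws (cal t))"
  by (simp add: word_append refl_eq word_diff word_scale)

lemma reduced_snoc_coroot_in_Qplus:
  assumes "reduced I (ws @ [t])"
  shows "word ws (cal t) \<in> Qplus I cal"
proof -
  have ws: "ws \<in> lists I" and "t \<in> I" using assms by (auto simp: reduced_def)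
  have "wlen I (word ws) \<le> wlen I (word ws \<circ> r t)"
    using assms wlen_word_le[OF ws] by (simp add: reduced_def word_append)
  then show ?thesis
    using coroot_image_in_Qplus[OF word_in_parabolic[OF ws] \<open>t \<in> I\<close>] by simp
qed

lemma dominant_minus_reduced_word: "dominant l \<Longrightarrow> reduced I ws \<Longrightarrow> l - word ws l \<in> Qplus I cal"
proof (induction ws rule: rev_induct)
  case Nil
  show ?case using zero_in_Qplus by (simp only: word.simps id_apply diff_self)
next
  case (snoc t ws)
  then have "reduced I ws" "t \<in> I" using reduced_append[of I ws "[t]"] by (auto simp: reduced_def)
  then have "l - word ws l \<in> Qplus I cal" "0 \<le> pair D (al t) l"
    using snoc.IH snoc.prems(1) by (blast, simp add: dominant_def)
  then show ?case
    unfolding word_snoc_minus using reduced_snoc_coroot_in_Qplus[OF snoc.prems(2)]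
    by (blast intro: Qplus_add Qplus_scale)
qed

lemma dominant_minus_image: "dominant l \<Longrightarrow> g \<in> parabolic I \<Longrightarrow> l - g l \<in> Qplus I cal"
  by (metis obtain_reduced_word dominant_minus_reduced_word)

lemma strictly_dominant_stabilizer:
  assumes l: "strictly_dominant l" and g: "g \<in> parabolic I" "g l = l"
  shows "g = id"
proof (rule ccontr)
  assume "g \<noteq> id"
  obtain ws where ws: "reduced I ws" "word ws = g" using g(1) by (rule obtain_reduced_word)
  with \<open>g \<noteq> id\<close> obtain ws' t where split: "ws = ws' @ [t]" by (cases ws rule: rev_cases) auto
  with ws have red: "reduced I ws'" "t \<in> I" "ws' \<in> lists I"
    using reduced_append[of I ws' "[t]"] by (auto simp: reduced_def)
  have "dominant l" using l by (auto simp: dominant_def strictly_dominant_def)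
  then have "l - word ws' l \<in> Qplus I cal" using red(1) by (rule dominant_minus_reduced_word)
  moreover have "scale (pair D (al t) l) (word ws' (cal t)) \<in> Qplus I cal"
    using l red(2) reduced_snoc_coroot_in_Qplus ws(1) split
    by (auto intro!: Qplus_scale simp: strictly_dominant_def)
  moreover have "(l - word ws' l) + scale (pair D (al t) l) (word ws' (cal t)) = 0"
    using g(2) ws(2) split word_snoc_minus[of l ws' t] by simp
  ultimately have "scale (pair D (al t) l) (word ws' (cal t)) = 0" by (rule Qplus_sum_eq_0)
  moreover have "pair D (al t) l \<noteq> 0" using l red(2) by (auto simp: strictly_dominant_def)
  ultimately have "word ws' (cal t) = 0" by (simp add: scale_def fun_eq_iff)
  then show False using word_eq_0_iff[OF red(3)] coroot_nonzero[OF red(2)] by simp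
qed

lemma parabolic_inverse:
  assumes "g \<in> parabolic I"
  obtains h where "h \<in> parabolic I" "h \<circ> g = id" "g \<circ> h = id"
proof -
  obtain ws where ws: "ws \<in> lists I" "g = word ws" using assms unfolding parabolic_def by blast
  then have "word (rev ws) \<in> parabolic I" by (intro word_in_parabolic) auto
  moreover have "word (rev ws) \<circ> g = id" "g \<circ> word (rev ws) = id"
    using ws(1) unfolding ws(2) by (simp_all add: fun_eq_iff word_rev_word word_word_rev)
  ultimately show ?thesis by (rule that)
qed

lemma strictly_dominant_orbit_inj:
  assumes "strictly_dominant l"
  shows "inj_on (\<lambda>g. g l) (parabolic I)"
proof (rule inj_onI)
  fix g h assume g: "g \<in> parabolic I" and h: "h \<in> parabolic I" and eq: "g l = h l"
  obtain h' where h': "h' \<in> parabolic I" "h' \<circ> h = id" "h \<circ> h' = id"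
    using h by (rule parabolic_inverse)
  have "(h' \<circ> g) l = l" using eq fun_cong[OF h'(2), of l] by simp
  then have "h' \<circ> g = id"
    using strictly_dominant_stabilizer[OF assms parabolic_comp[OF h'(1) g]] by simp
  moreover have "g = h \<circ> (h' \<circ> g)" using h'(3) by (simp flip: comp_assoc)
  ultimately show "g = h" by simp
qed

definition gram :: "nat \<Rightarrow> (nat \<Rightarrow> 'i) \<Rightarrow> int mat" where
  "gram n e = mat n n (\<lambda>(i, j). pair D (al (e i)) (al (e j)))"

lemma pair_root_comb:
  assumes "i < n" "y \<in> carrier_vec n"
  shows "pair D (al (e i)) (\<lambda>k. \<Sum>j<n. y $ j * al (e j) k) = (gram n e *\<^sub>v y) $ i"
proof -
  have "pair D (al (e i)) (\<lambda>k. \<Sum>j<n. y $ j * al (e j) k) = (\<Sum>j<n. pair D (al (e i)) (al (e j)) * y $ j)"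
    by (simp add: pair_def sum_distrib_left sum_distrib_right sum.swap[of _ D] mult_ac)
  also have "\<dots> = (gram n e *\<^sub>v y) $ i"
    using assms by (auto simp: gram_def scalar_prod_def atLeast0LessThan intro!: sum.cong)
  finally show ?thesis .
qed

lemma root_comb_lat:
  assumes "bij_betw e {..<n} I"
  shows "(\<lambda>k. \<Sum>j<n. y j * al (e j) k) \<in> lat D"
proof -
  have "al (e j) k = 0" if "j < n" "k \<notin> D" for j k
    using roots_lat assms that by (auto simp: lat_def bij_betw_def)
  then show ?thesis by (simp add: lat_def)
qed

lemma gram_det_nonzero:
  assumes e: "bij_betw e {..<n} I"
  shows "det (gram n e) \<noteq> 0"
proof
  assume "det (gram n e) = 0"
  then obtain y where y: "y \<in> carrier_vec n" "y \<noteq> 0\<^sub>v n" "gram n e *\<^sub>v y = 0\<^sub>v n"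
    using det_0_iff_vec_prod_zero[of "gram n e" n] by (auto simp: gram_def)
  define w where "w = (\<lambda>k. \<Sum>j<n. y $ j * al (e j) k)"
  have "pair D w w = (\<Sum>i<n. y $ i * pair D (al (e i)) w)"
    by (simp add: w_def pair_def sum_distrib_left sum_distrib_right sum.swap[of _ D] mult_ac)
  also have "\<dots> = 0"
    using y pair_root_comb[of _ n y e] by (simp add: w_def)
  finally have "pair D w w = 0" .
  moreover have "w \<in> lat D" unfolding w_def by (rule root_comb_lat[OF e])
  ultimately have "w = (\<lambda>k. 0)" using pair_self_eq_0 finite_D by (simp add: zero_fun_def)
  then have "y $ j = 0" if "j < n" for j
    using free_family_reindex[OF free_roots e, of "\<lambda>j. y $ j"] that by (simp add: w_def)
  then show False using y(1,2) by (auto intro: eq_vecI)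
qed

lemma exists_strictly_dominant:
  obtains l where "l \<in> lat D" "strictly_dominant l"
proof -
  obtain e where e: "bij_betw e {..<card I} I"
    using ex_bij_betw_nat_finite[OF finite_I] by (metis atLeast0LessThan)
  define M where "M = gram (card I) e"
  have M: "M \<in> carrier_mat (card I) (card I)" by (simp add: M_def gram_def)
  define z where "z = adj_mat M *\<^sub>v vec (card I) (\<lambda>_. det M)"
  have z: "z \<in> carrier_vec (card I)"
    unfolding z_def by (rule mult_mat_vec_carrier[OF adj_mat(1)[OF M]]) simp
  define l where "l = (\<lambda>k. \<Sum>j<card I. z $ j * al (e j) k)"
  have "l \<in> lat D" unfolding l_def by (rule root_comb_lat[OF e])
  moreover have "1 \<le> pair D (al i) l" if i: "i \<in> I" for i
  proof -
    obtain j where j: "j < card I" "i = e j" using e i by (auto simp: bij_betw_def)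
    have "pair D (al i) l = det M * det M"
      using pair_root_comb[OF j(1) z] mult_adj_mat_vec[OF M j(1)] j(2) by (simp add: l_def M_def z_def)
    moreover have "0 < det M * det M"
      using gram_det_nonzero[OF e] by (simp add: M_def zero_less_mult_iff linorder_neq_iff disj_commute)
    ultimately show ?thesis by linarith
  qed
  ultimately show ?thesis using that by (auto simp: strictly_dominant_def)
qed

lemma refl_lat: "i \<in> I \<Longrightarrow> v \<in> lat D \<Longrightarrow> r i v \<in> lat D"
  using coroots_lat by (auto simp: lat_def refl_def)

lemma parabolic_lat: "g \<in> parabolic I \<Longrightarrow> v \<in> lat D \<Longrightarrow> g v \<in> lat D"
proof -
  have "ws \<in> lists I \<Longrightarrow> v \<in> lat D \<Longrightarrow> word ws v \<in> lat D" for ws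
    by (induction ws) (auto simp: refl_lat)
  then show "g \<in> parabolic I \<Longrightarrow> v \<in> lat D \<Longrightarrow> g v \<in> lat D"
    unfolding parabolic_def by blast
qed

lemma weyl_imp_restrict_parabolic:
  "w \<in> weyl D I al cal \<Longrightarrow> \<exists>g\<in>parabolic I. w = restrict g (lat D)"
proof (induction rule: weyl.induct)
  case weyl_id
  have "(\<lambda>v. if v \<in> lat D then v else undefined) = restrict id (lat D)"
    by (simp add: restrict_def fun_eq_iff)
  then show ?case using id_in_parabolic by blast
next
  case (weyl_step w i)
  then obtain g where g: "g \<in> parabolic I" "w = restrict g (lat D)" by blast
  have "(\<lambda>v. if v \<in> lat D then r i (w v) else undefined) = restrict (r i \<circ> g) (lat D)"
    unfolding g(2) by (simp add: restrict_def fun_eq_iff)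
  then show ?case
    using parabolic_comp[OF refl_in_parabolic[OF weyl_step.hyps(2)] g(1)] by blast
qed

lemma restrict_word_in_weyl: "ws \<in> lists I \<Longrightarrow> restrict (word ws) (lat D) \<in> weyl D I al cal"
proof (induction ws)
  case Nil
  have "restrict (word []) (lat D) = (\<lambda>v. if v \<in> lat D then v else undefined)"
    by (simp add: restrict_def fun_eq_iff)
  then show ?case by (simp add: weyl.weyl_id)
next
  case (Cons i ws)
  have "(\<lambda>v. if v \<in> lat D then r i (restrict (word ws) (lat D) v) else undefined)
      \<in> weyl D I al cal"
    using Cons by (intro weyl.weyl_step) auto
  moreover have "restrict (word (i # ws)) (lat D)
      = (\<lambda>v. if v \<in> lat D then r i (restrict (word ws) (lat D) v) else undefined)"
    by (simp add: restrict_def fun_eq_iff)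
  ultimately show ?case by (simp only:)
qed

lemma weyl_eq_restrict_parabolic: "weyl D I al cal = (\<lambda>g. restrict g (lat D)) ` parabolic I"
  using weyl_imp_restrict_parabolic restrict_word_in_weyl unfolding parabolic_def by blast

text \<open>\<open>weyl\<close> consists of maps restricted to \<open>Y = lat D\<close>; no information is lost, since the
  elements of \<open>parabolic I\<close> are linear and fix the functions supported outside \<open>D\<close>.\<close>

lemma parabolic_outside_D:
  assumes "g \<in> parabolic I" "\<forall>k\<in>D. v k = 0"
  shows "g v = v"
proof -
  have "word ws v = v" if "ws \<in> lists I" for ws
    using that by (induction ws) (auto simp: refl_def pair_def assms(2) fun_eq_iff)
  then show ?thesis using assms(1) unfolding parabolic_def by blast
qed

lemma inj_on_restrict_parabolic: "inj_on (\<lambda>g. restrict g (lat D)) (parabolic I)"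
proof (rule inj_onI)
  fix g h assume g: "g \<in> parabolic I" and h: "h \<in> parabolic I"
    and eq: "restrict g (lat D) = restrict h (lat D)"
  show "g = h"
  proof
    fix v :: "'d \<Rightarrow> int"
    define v_in where "v_in = (\<lambda>k. if k \<in> D then v k else 0)"
    define v_out where "v_out = (\<lambda>k. if k \<in> D then 0 else v k)"
    have split: "v = v_in + v_out" by (simp add: v_in_def v_out_def fun_eq_iff)
    have "v_in \<in> lat D" by (simp add: v_in_def lat_def)
    then have "g v_in = h v_in" using fun_cong[OF eq, of v_in] by simp
    moreover have "\<forall>k\<in>D. v_out k = 0" by (simp add: v_out_def)
    ultimately show "g v = h v"
      unfolding split using g h by (simp add: parabolic_add parabolic_outside_D)
  qed
qed

lemma finite_weyl_iff: "finite (weyl D I al cal) \<longleftrightarrow> finite (parabolic I)"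
  using weyl_eq_restrict_parabolic inj_on_restrict_parabolic finite_image_iff by metis

lemma w_inv_parabolic:
  "f \<in> w_inv D I al cal S \<Longrightarrow> g \<in> parabolic I \<Longrightarrow> l \<in> lat D \<Longrightarrow> f (g l) = f l"
  using weyl_eq_restrict_parabolic unfolding w_inv_def by force

section \<open>Finite Weyl group\<close>

text \<open>Right multiplication by \<open>r\<^sub>i\<close> permutes \<open>W\<^sup>v\<close> and negates \<open>g(\<alpha>\<^sub>i\<^sup>\<or>)\<close>.\<close>

lemma sum_parabolic_coroot:
  assumes "i \<in> I"
  shows "(\<Sum>g\<in>parabolic I. g (cal i)) = 0"
proof -
  have inv: "\<forall>g\<in>parabolic I. (g \<circ> r i) \<circ> r i = g"
    using assms by (simp add: fun_eq_iff refl_refl)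
  have closed: "(\<lambda>g. g \<circ> r i) ` parabolic I \<subseteq> parabolic I"
    using assms by (auto intro: parabolic_comp refl_in_parabolic)
  have bij: "bij_betw (\<lambda>g. g \<circ> r i) (parabolic I) (parabolic I)"
    using bij_betw_byWitness[OF inv inv closed closed] .
  have "(\<Sum>g\<in>parabolic I. g (cal i)) = (\<Sum>g\<in>parabolic I. (g \<circ> r i) (cal i))"
    using sum.reindex_bij_betw[OF bij, of "\<lambda>g. g (cal i)"] by simp
  also have "\<dots> = (\<Sum>g\<in>parabolic I. - g (cal i))"
    using assms by (intro sum.cong) (simp_all add: refl_coroot_self parabolic_uminus fun_eq_iff)
  also have "\<dots> = - (\<Sum>g\<in>parabolic I. g (cal i))"
    by (rule sum_negf)
  finally show ?thesis by (simp add: fun_eq_iff sum_fun_apply)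
qed

lemma sum_parabolic_coroot_comb: "(\<Sum>g\<in>parabolic I. g (coroot_comb n)) = 0"
proof -
  have "g (coroot_comb n) = (\<Sum>i\<in>I. scale (n i) (g (cal i)))" if "g \<in> parabolic I" for g
    using that word_coroot_comb unfolding parabolic_def by blast
  then have "(\<Sum>g\<in>parabolic I. g (coroot_comb n)) k = (\<Sum>i\<in>I. n i * (\<Sum>g\<in>parabolic I. g (cal i) k))"
    for k by (simp add: sum_fun_apply scale_def sum_distrib_left sum.swap[of _ I])
  then show ?thesis
    using sum_parabolic_coroot by (simp add: fun_eq_iff sum_fun_apply)
qed

lemma finite_Qplus_interval: "finite {x. x \<in> Qplus I cal \<and> t - x \<in> Qplus I cal}"
proof (cases "\<exists>N. t = coroot_comb N")
  case True
  then obtain N where N: "t = coroot_comb N" by blast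
  have "{x. x \<in> Qplus I cal \<and> t - x \<in> Qplus I cal} \<subseteq> coroot_comb ` PiE I (\<lambda>i. {0..N i})"
  proof
    fix x assume "x \<in> {x. x \<in> Qplus I cal \<and> t - x \<in> Qplus I cal}"
    then obtain n m where n: "\<forall>i\<in>I. 0 \<le> n i" "x = coroot_comb n"
      and m: "\<forall>i\<in>I. 0 \<le> m i" "t - x = coroot_comb m"
      unfolding Qplus_iff by blast
    then have "coroot_comb n + coroot_comb m = t" by (metis add.commute diff_add_cancel)
    then have "coroot_comb (\<lambda>i. n i + m i) = coroot_comb N" using N by (simp add: coroot_comb_add)
    then have sum: "n i + m i = N i" if "i \<in> I" for i using coroot_comb_inj that by blast
    have "n i \<in> {0..N i}" if "i \<in> I" for i
      using sum[OF that] bspec[OF n(1) that] bspec[OF m(1) that] by simp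
    then have "restrict n I \<in> PiE I (\<lambda>i. {0..N i})" by simp
    moreover have "x = coroot_comb (restrict n I)"
      using n by (simp add: coroot_comb_apply fun_eq_iff)
    ultimately show "x \<in> coroot_comb ` PiE I (\<lambda>i. {0..N i})" by blast
  qed
  moreover have "finite (PiE I (\<lambda>i. {0..N i}))" using finite_I by (intro finite_PiE) auto
  ultimately show ?thesis by (meson finite_imageI finite_subset)
next
  case False
  have "{x. x \<in> Qplus I cal \<and> t - x \<in> Qplus I cal} = {}"
  proof (rule equals0I)
    fix x assume "x \<in> {x. x \<in> Qplus I cal \<and> t - x \<in> Qplus I cal}"
    then obtain n m where "x = coroot_comb n" "t - x = coroot_comb m" unfolding Qplus_iff by blast
    then have "t = coroot_comb (\<lambda>i. n i + m i)" by (metis add.commute coroot_comb_add diff_add_cancel)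
    with False show False by blast
  qed
  then show ?thesis by (simp only: finite.emptyI)
qed

text \<open>If every \<open>g(\<nu>)\<close> lies below \<open>\<phi>(g)\<close>, then summing over the finite group shows that
  \<open>\<phi>(1) - \<nu>\<close> lies in an interval of \<open>Q\<^sup>\<or>\<^sub>+\<close> determined by \<open>\<phi>\<close> alone.\<close>

definition orbit_bound :: "((('d \<Rightarrow> int) \<Rightarrow> ('d \<Rightarrow> int)) \<Rightarrow> ('d \<Rightarrow> int)) \<Rightarrow> ('d \<Rightarrow> int)" where
  "orbit_bound \<phi> = (\<Sum>g\<in>parabolic I. \<phi> g) - (\<Sum>g\<in>parabolic I. g (\<phi> id))"

lemma orbit_bound_le:
  assumes finite: "finite (parabolic I)" and below: "\<And>g. g \<in> parabolic I \<Longrightarrow> \<phi> g - g \<nu> \<in> Qplus I cal"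
  shows "\<phi> id - \<nu> \<in> Qplus I cal" "orbit_bound \<phi> - (\<phi> id - \<nu>) \<in> Qplus I cal"
proof -
  show x: "\<phi> id - \<nu> \<in> Qplus I cal" using below[OF id_in_parabolic] by simp
  then obtain n where n: "\<phi> id - \<nu> = coroot_comb n" unfolding Qplus_iff by blast
  have "\<phi> id = \<nu> + coroot_comb n" using n by (metis add.commute diff_add_cancel)
  then have "(\<Sum>g\<in>parabolic I. g (\<phi> id)) = (\<Sum>g\<in>parabolic I. g \<nu> + g (coroot_comb n))"
    by (intro sum.cong) (simp_all only: parabolic_add)
  also have "\<dots> = (\<Sum>g\<in>parabolic I. g \<nu>)"
    by (simp add: sum.distrib sum_parabolic_coroot_comb)
  finally have "orbit_bound \<phi> = (\<Sum>g\<in>parabolic I. \<phi> g - g \<nu>)"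
    by (simp add: orbit_bound_def sum_subtractf)
  also have "\<dots> = (\<phi> id - \<nu>) + (\<Sum>g\<in>parabolic I - {id}. \<phi> g - g \<nu>)"
    using sum.remove[OF finite id_in_parabolic, of "\<lambda>g. \<phi> g - g \<nu>"] by (simp only: id_apply)
  finally have "orbit_bound \<phi> - (\<phi> id - \<nu>) = (\<Sum>g\<in>parabolic I - {id}. \<phi> g - g \<nu>)"
    by simp
  moreover have "(\<Sum>g\<in>parabolic I - {id}. \<phi> g - g \<nu>) \<in> Qplus I cal"
    by (rule Qplus_sum) (use below in blast)
  ultimately show "orbit_bound \<phi> - (\<phi> id - \<nu>) \<in> Qplus I cal" by simp
qed

lemma invariant_support_finite:
  assumes finite: "finite (parabolic I)" and f: "f \<in> w_inv D I al cal (looijenga D I cal)"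
  shows "finite (supp f)"
proof -
  have supp_lat: "supp f \<subseteq> lat D" and "almost_finite D I cal (supp f)"
    using f unfolding w_inv_def looijenga_def by auto
  then obtain J where J: "finite J" "\<forall>e\<in>supp f. \<exists>j\<in>J. leQ I cal e j"
    unfolding almost_finite_def by blast
  define F where "F = (\<Union>\<phi>\<in>PiE (parabolic I) (\<lambda>_. J).
    (\<lambda>x. \<phi> id - x) ` {x. x \<in> Qplus I cal \<and> orbit_bound \<phi> - x \<in> Qplus I cal})"
  have "finite F"
    unfolding F_def using finite J(1) finite_Qplus_interval
    by (intro finite_UN_I finite_PiE finite_imageI) auto
  moreover have "supp f \<subseteq> F"
  proof
    fix \<nu> assume \<nu>: "\<nu> \<in> supp f"
    have "\<exists>j\<in>J. j - g \<nu> \<in> Qplus I cal" if "g \<in> parabolic I" for g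
    proof -
      have "g \<nu> \<in> supp f" using \<nu> supp_lat that w_inv_parabolic[OF f] by (auto simp: supp_def)
      then show ?thesis using J(2) by (auto simp: leQ_def)
    qed
    then obtain \<phi> where \<phi>: "\<And>g. g \<in> parabolic I \<Longrightarrow> \<phi> g \<in> J \<and> \<phi> g - g \<nu> \<in> Qplus I cal"
      by metis
    define \<phi>' where "\<phi>' = restrict \<phi> (parabolic I)"
    have "\<phi>' \<in> PiE (parabolic I) (\<lambda>_. J)" using \<phi> by (auto simp: \<phi>'_def)
    moreover have below: "\<phi>' g - g \<nu> \<in> Qplus I cal" if "g \<in> parabolic I" for g
      using \<phi> that by (simp add: \<phi>'_def)
    then have "\<phi>' id - \<nu> \<in> {x. x \<in> Qplus I cal \<and> orbit_bound \<phi>' - x \<in> Qplus I cal}"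
      using orbit_bound_le[OF finite] by blast
    then have "\<nu> \<in> (\<lambda>x. \<phi>' id - x) ` {x. x \<in> Qplus I cal \<and> orbit_bound \<phi>' - x \<in> Qplus I cal}"
      by (rule rev_image_eqI) simp
    ultimately show "\<nu> \<in> F" unfolding F_def by blast
  qed
  ultimately show ?thesis by (rule finite_subset[rotated])
qed

lemma finite_parabolic_invariants_eq:
  assumes "finite (parabolic I)"
  shows "w_inv D I al cal (looijenga D I cal) = w_inv D I al cal (group_alg D)"
proof -
  have "group_alg D \<subseteq> looijenga D I cal"
  proof
    fix f assume f: "f \<in> group_alg D"
    have "leQ I cal e e" for e
      unfolding leQ_def using zero_in_Qplus by simp
    then have "almost_finite D I cal (supp f)"
      using f unfolding almost_finite_def group_alg_def by blast
    then show "f \<in> looijenga D I cal" using f unfolding looijenga_def group_alg_def by blast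
  qed
  then show ?thesis
    using invariant_support_finite[OF assms]
    unfolding w_inv_def looijenga_def group_alg_def by blast
qed

section \<open>Infinite Weyl group\<close>

lemma orbit_closed:
  assumes "h \<in> parabolic I"
  shows "h x \<in> (\<lambda>g. g l) ` parabolic I \<longleftrightarrow> x \<in> (\<lambda>g. g l) ` parabolic I"
proof
  assume "h x \<in> (\<lambda>g. g l) ` parabolic I"
  then obtain g where g: "g \<in> parabolic I" "h x = g l" by blast
  obtain h' where h': "h' \<in> parabolic I" "h' \<circ> h = id" using assms by (rule parabolic_inverse)
  have "x = (h' \<circ> g) l" using g(2) fun_cong[OF h'(2), of x] by simp
  then show "x \<in> (\<lambda>g. g l) ` parabolic I" using parabolic_comp[OF h'(1) g(1)] by blast
next
  assume "x \<in> (\<lambda>g. g l) ` parabolic I"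
  then obtain g where "g \<in> parabolic I" "x = g l" by blast
  then show "h x \<in> (\<lambda>g. g l) ` parabolic I"
    by (intro rev_image_eqI[of "h \<circ> g"]) (simp_all add: parabolic_comp[OF assms])
qed

lemma infinite_parabolic_invariants_neq:
  assumes infinite: "infinite (parabolic I)" and l: "l \<in> lat D" "strictly_dominant l"
    and nontrivial: "(0 :: 'r :: zero_neq_one) \<noteq> 1"
  shows "w_inv D I al cal (looijenga D I cal :: (('d \<Rightarrow> int) \<Rightarrow> 'r) set) \<noteq> w_inv D I al cal (group_alg D)"
proof -
  define orbit where "orbit = (\<lambda>g. g l) ` parabolic I"
  define f :: "('d \<Rightarrow> int) \<Rightarrow> 'r" where "f x = (if x \<in> orbit then 1 else 0)" for x
  have supp: "supp f = orbit" using nontrivial by (auto simp: supp_def f_def)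
  have "infinite orbit"
    unfolding orbit_def using strictly_dominant_orbit_inj[OF l(2)] infinite finite_image_iff by blast
  have "orbit \<subseteq> lat D" unfolding orbit_def using parabolic_lat l(1) by auto
  moreover have "almost_finite D I cal orbit"
  proof -
    have "dominant l" using l(2) by (auto simp: dominant_def strictly_dominant_def)
    then have "\<forall>e\<in>orbit. leQ I cal e l" unfolding orbit_def leQ_def using dominant_minus_image by blast
    then show ?thesis unfolding almost_finite_def using l(1) by blast
  qed
  moreover have "\<forall>w\<in>weyl D I al cal. \<forall>x\<in>lat D. f (w x) = f x"
    using orbit_closed unfolding weyl_eq_restrict_parabolic f_def orbit_def by auto
  ultimately have "f \<in> w_inv D I al cal (looijenga D I cal)"
    unfolding w_inv_def looijenga_def using supp by auto
  moreover have "f \<notin> w_inv D I al cal (group_alg D)"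
    unfolding w_inv_def group_alg_def using supp \<open>infinite orbit\<close> by auto
  ultimately show ?thesis by blast
qed

end

theorem mainTheorem14:
  fixes D :: "'d set" and I :: "'i set"
    and al cal :: "'i \<Rightarrow> 'd \<Rightarrow> int"
  assumes "finite D" and "finite I"
    and "\<forall>i\<in>I. al i \<in> lat D" and "\<forall>i\<in>I. cal i \<in> lat D"
    and "free_family I al" and "free_family I cal"
    and "gen_cartan I (\<lambda>i j. pair D (al j) (cal i))"
    and "(0::'r::comm_ring_1) \<noteq> 1"
  shows "(w_inv D I al cal (looijenga D I cal :: (('d \<Rightarrow> int) \<Rightarrow> 'r) set)
            = w_inv D I al cal (group_alg D))
         \<longleftrightarrow> finite (weyl D I al cal)"
proof -
  interpret root_datum D I al cal
    using assms(1-7) by unfold_locales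
  obtain l where "l \<in> lat D" "strictly_dominant l" by (rule exists_strictly_dominant)
  then show ?thesis
    using finite_weyl_iff finite_parabolic_invariants_eq
      infinite_parabolic_invariants_neq[OF _ _ _ assms(8)] by blast
qed

end
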